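(* Let $\gamma>0$, let $\beta_1=\beta_1(\gamma)$ be the unique positive solution of $\frac{\sqrt\pi}{2}\gamma x(1+x)^{1/2}(3+x)=1$, and let $0\le\beta<\beta_1$. For each $\lambda>0$ let $\varphi_\lambda$ be the unique solution, within the set of bounded analytic functions $h:[0,\lambda]\to\mathbb{R}$ with $0\le h\le 1$, of \begin{align*} &[(1+\beta y(\eta))y'(\eta)]'+2\eta y'(\eta)=0, \quad 0<\eta<\lambda,\\ &y'(0)+\beta y(0)y'(0)-\gamma y(0)=0,\\ &y(\lambda)=1. \end{align*} Then $\varphi_\lambda'$ depends continuously on the parameter $\lambda>0$; in particular the map $\lambda\mapsto\varphi_\lambda'(\lambda)$ is continuous on $(0,\infty)$. *)

theory Defs
  imports "HOL-Analysis.Analysis"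
begin

definition beta1 :: "real \<Rightarrow> real" where
  "beta1 \<gamma> = (THE x. x > 0 \<and> sqrt pi / 2 * \<gamma> * x * sqrt (1 + x) * (3 + x) = 1)"

definition real_analytic_on :: "(real \<Rightarrow> real) \<Rightarrow> real set \<Rightarrow> bool" where
  "real_analytic_on h S \<longleftrightarrow>
     (\<forall>x\<in>S. \<exists>r>0. \<exists>a::nat \<Rightarrow> real.
        \<forall>y\<in>S. \<bar>y - x\<bar> < r \<longrightarrow> (\<lambda>n. a n * (y - x) ^ n) sums h y)"

definition admissible :: "real \<Rightarrow> (real \<Rightarrow> real) \<Rightarrow> bool" where
  "admissible lam h \<longleftrightarrow> real_analytic_on h {0..lam} \<and>
     bounded (h ` {0..lam}) \<and> (\<forall>t\<in>{0..lam}. 0 \<le> h t \<and> h t \<le> 1)"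

definition solves_bvp :: "real \<Rightarrow> real \<Rightarrow> real \<Rightarrow> (real \<Rightarrow> real) \<Rightarrow> bool" where
  "solves_bvp \<gamma> \<beta> lam h \<longleftrightarrow>
     (\<exists>y'::real \<Rightarrow> real.
        (\<forall>t\<in>{0..lam}. (h has_real_derivative y' t) (at t within {0..lam})) \<and>
        (\<forall>t\<in>{0<..<lam}. ((\<lambda>s. (1 + \<beta> * h s) * y' s) has_real_derivative (- 2 * t * y' t)) (at t)) \<and>
        y' 0 + \<beta> * h 0 * y' 0 - \<gamma> * h 0 = 0 \<and>
        h lam = 1)"

end

theory Submission
  imports Defs
begin

(* With the Kirchhoff transform F(y) = y + beta y^2/2 the equation reads F(y)'' + 2 eta y' = 0.
   Hence the flux (1 + beta y) y' times exp (I(eta)), where I(eta) = int_0^eta 2s/(1 + beta y(s)) ds,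
   is constant; the boundary condition at 0 identifies the constant, so that
   y' = gamma y(0) exp (-I) / (1 + beta y) is an explicit functional of y.
   A Gronwall argument on the negative part of F(y1) - F(y2) gives a comparison principle:
   solutions ordered at 0 stay ordered.  It follows that phi_lam decreases in lam with
   0 <= phi_l1 - phi_l2 <= gamma (l2 - l1), and that I moves by O(l2 - l1) as well.  With the
   Lipschitz bounds in eta this makes phi and I, hence phi' given by the formula above, jointly
   continuous on the triangle 0 <= eta <= lam. *)

section \<open>Calculus on compact intervals\<close>

lemma has_real_derivative_nonneg_imp_le:
  fixes f f' :: "real \<Rightarrow> real"
  assumes deriv: "\<And>x. x \<in> {a..b} \<Longrightarrow> (f has_real_derivative f' x) (at x within {a..b})"
    and nonneg: "\<And>x. x \<in> {a..b} \<Longrightarrow> 0 \<le> f' x"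
    and "a \<le> x" "x \<le> y" "y \<le> b"
  shows "f x \<le> f y"
proof (rule DERIV_nonneg_imp_increasing_open[OF \<open>x \<le> y\<close>])
  show "continuous_on {x..y} f"
    using DERIV_continuous_on[OF deriv] by (rule continuous_on_subset) (use assms in auto)
  fix z assume z: "x < z" "z < y"
  then have "at z within {a..b} = at z" using assms by (intro at_within_Icc_at) auto
  then show "\<exists>l. (f has_real_derivative l) (at z) \<and> 0 \<le> l"
    using deriv[of z] nonneg[of z] z assms by auto
qed

lemma has_real_derivative_pos_imp_less:
  fixes f f' :: "real \<Rightarrow> real"
  assumes deriv: "\<And>x. x \<in> {a..b} \<Longrightarrow> (f has_real_derivative f' x) (at x within {a..b})"
    and pos: "\<And>x. x \<in> {a..b} \<Longrightarrow> 0 < f' x"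
    and "a \<le> x" "x < y" "y \<le> b"
  shows "f x < f y"
proof (rule DERIV_pos_imp_increasing_open[OF \<open>x < y\<close>])
  show "continuous_on {x..y} f"
    using DERIV_continuous_on[OF deriv] by (rule continuous_on_subset) (use assms in auto)
  fix z assume z: "x < z" "z < y"
  then have "at z within {a..b} = at z" using assms by (intro at_within_Icc_at) auto
  then show "\<exists>l. (f has_real_derivative l) (at z) \<and> 0 < l"
    using deriv[of z] pos[of z] z assms by auto
qed

lemma has_real_derivative_bounded_imp_lipschitz:
  fixes f f' :: "real \<Rightarrow> real"
  assumes "\<And>x. x \<in> {a..b} \<Longrightarrow> (f has_real_derivative f' x) (at x within {a..b})"
    and "\<And>x. x \<in> {a..b} \<Longrightarrow> \<bar>f' x\<bar> \<le> B"
    and "x \<in> {a..b}" "y \<in> {a..b}"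
  shows "\<bar>f x - f y\<bar> \<le> B * \<bar>x - y\<bar>"
  using field_differentiable_bound[of "{a..b}" f f' B x y] assms by auto

lemma has_real_derivative_Icc_from_interior:
  fixes h g :: "real \<Rightarrow> real"
  assumes h: "continuous_on {a..b} h" and g: "continuous_on {a..b} g"
    and deriv: "\<And>t. t \<in> {a<..<b} \<Longrightarrow> (h has_real_derivative g t) (at t)"
    and t: "t \<in> {a..b}"
  shows "(h has_real_derivative g t) (at t within {a..b})"
proof (rule has_field_derivative_transform_within[OF _ zero_less_one t])
  show "((\<lambda>s. h a + integral {a..s} g) has_real_derivative g t) (at t within {a..b})"
    using DERIV_add[OF DERIV_const integral_has_real_derivative[OF g t]] by simp
  fix s assume s: "s \<in> {a..b}"
  have "(g has_integral h s - h a) {a..s}"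
  proof (rule fundamental_theorem_of_calculus_interior)
    show "continuous_on {a..s} h" using h by (rule continuous_on_subset) (use s in auto)
  qed (use s deriv in \<open>auto simp: has_real_derivative_iff_has_vector_derivative\<close>)
  then show "h a + integral {a..s} g = h s" by (simp add: integral_unique)
qed

lemma gronwall_zero:
  fixes v :: "real \<Rightarrow> real"
  assumes cont: "continuous_on {0..L} v" and nonneg: "\<And>t. t \<in> {0..L} \<Longrightarrow> 0 \<le> v t"
    and "0 \<le> K" and le: "\<And>t. t \<in> {0..L} \<Longrightarrow> v t \<le> K * integral {0..t} v"
    and t: "t \<in> {0..L}"
  shows "v t = 0"
proof -
  define V where "V t = integral {0..t} v" for t
  define g where "g t = - exp (- K * t) * V t" for t
  have "(g has_real_derivative exp (- K * x) * (K * V x - v x)) (at x within {0..L})"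
    if "x \<in> {0..L}" for x
    unfolding g_def V_def
    by (rule derivative_eq_intros integral_has_real_derivative[OF cont that] refl)+
      (simp add: algebra_simps)
  then have "g 0 \<le> g t"
    by (rule has_real_derivative_nonneg_imp_le) (use le t in \<open>auto simp: V_def\<close>)
  moreover have "0 \<le> V t" unfolding V_def
    by (rule integral_nonneg, rule integrable_continuous_interval, rule continuous_on_subset[OF cont])
      (use t nonneg in auto)
  ultimately have "V t = 0" by (simp add: g_def V_def mult_le_0_iff)
  then show ?thesis using le[OF t] nonneg[OF t] by (simp add: V_def)
qed

lemma exp_minus_diff_le:
  fixes x y :: real
  shows "exp (- x) - exp (- y) \<le> exp (- x) * (y - x)"
proof -
  have "exp (- x) * (1 + (x - y)) \<le> exp (- x) * exp (x - y)"
    by (intro mult_left_mono exp_ge_add_one_self) auto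
  then show ?thesis by (simp add: algebra_simps flip: exp_add)
qed

lemma mult_exp_minus_diff_ge:
  fixes a1 a2 I1 I2 M :: real
  assumes "0 \<le> a2" "a2 \<le> a1" "a2 \<le> 1" "0 \<le> I2" "I1 - I2 \<le> M" "0 \<le> M"
  shows "- M \<le> a1 * exp (- I1) - a2 * exp (- I2)"
proof -
  have "a2 * (exp (- I2) - exp (- I1)) \<le> a2 * (exp (- I2) * M)"
    using exp_minus_diff_le[of I2 I1] assms(1,5)
    by (intro mult_left_mono order_trans[OF _ mult_left_mono[of _ M]]) auto
  also have "\<dots> \<le> 1 * (1 * M)"
    using assms by (intro mult_mono) auto
  finally have "a2 * exp (- I2) - a2 * exp (- I1) \<le> M" by (simp add: algebra_simps)
  moreover have "a2 * exp (- I1) \<le> a1 * exp (- I1)" using assms(2) by simp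
  ultimately show ?thesis by linarith
qed

section \<open>Kirchhoff transform and integrating factor\<close>

definition kirchhoff :: "real \<Rightarrow> real \<Rightarrow> real" where
  "kirchhoff \<beta> x = x + \<beta> * x\<^sup>2 / 2"

definition intfac :: "real \<Rightarrow> (real \<Rightarrow> real) \<Rightarrow> real \<Rightarrow> real" where
  "intfac \<beta> h t = integral {0..t} (\<lambda>s. 2 * s / (1 + \<beta> * h s))"

definition slope :: "real \<Rightarrow> real \<Rightarrow> (real \<Rightarrow> real) \<Rightarrow> real \<Rightarrow> real" where
  "slope \<gamma> \<beta> h t = \<gamma> * h 0 * exp (- intfac \<beta> h t) / (1 + \<beta> * h t)"

lemma kirchhoff_diff_ge:
  assumes "0 \<le> \<beta>" "0 \<le> x2" "x2 \<le> x1"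
  shows "x1 - x2 \<le> kirchhoff \<beta> x1 - kirchhoff \<beta> x2"
proof -
  have "kirchhoff \<beta> x1 - kirchhoff \<beta> x2 = (x1 - x2) * (1 + \<beta> * (x1 + x2) / 2)"
    by (simp add: kirchhoff_def power2_eq_square field_simps)
  moreover have "(x1 - x2) * 1 \<le> (x1 - x2) * (1 + \<beta> * (x1 + x2) / 2)"
    using assms by (intro mult_left_mono) auto
  ultimately show ?thesis by simp
qed

lemma kirchhoff_le_iff:
  assumes "0 \<le> \<beta>" "0 \<le> x" "0 \<le> y"
  shows "kirchhoff \<beta> x \<le> kirchhoff \<beta> y \<longleftrightarrow> x \<le> y"
  using kirchhoff_diff_ge[of \<beta> x y] kirchhoff_diff_ge[of \<beta> y x] assms by linarith

lemma kirchhoff_has_real_derivative: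
  assumes "(h has_real_derivative h') (at x within S)"
  shows "((\<lambda>s. kirchhoff \<beta> (h s)) has_real_derivative (1 + \<beta> * h x) * h') (at x within S)"
  unfolding kirchhoff_def power2_eq_square
  by (auto intro!: derivative_eq_intros assms simp: algebra_simps)

lemma continuous_on_kirchhoff:
  "continuous_on S h \<Longrightarrow> continuous_on S (\<lambda>s. kirchhoff \<beta> (h s))"
  unfolding kirchhoff_def by (intro continuous_intros) auto

lemma continuous_on_intfac_integrand:
  fixes h :: "real \<Rightarrow> real"
  assumes "0 \<le> \<beta>" "continuous_on S h" "\<And>s. s \<in> S \<Longrightarrow> 0 \<le> h s"
  shows "continuous_on S (\<lambda>s. 2 * s / (1 + \<beta> * h s))"
proof -
  have "\<forall>s\<in>S. 1 + \<beta> * h s \<noteq> 0"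
    using assms(1,3) by (metis add_nonneg_eq_0_iff mult_nonneg_nonneg zero_neq_one zero_le_one)
  then show ?thesis using assms(2) by (intro continuous_intros) auto
qed

lemma intfac_integrand_integrable:
  fixes h :: "real \<Rightarrow> real"
  assumes "0 \<le> \<beta>" "continuous_on {0..L} h" "\<And>s. s \<in> {0..L} \<Longrightarrow> 0 \<le> h s" "t \<in> {0..L}"
  shows "(\<lambda>s. 2 * s / (1 + \<beta> * h s)) integrable_on {0..t}"
  by (rule integrable_continuous_interval, rule continuous_on_subset,
      rule continuous_on_intfac_integrand[OF assms(1-3)]) (use assms(4) in auto)

lemma intfac_has_real_derivative:
  assumes "0 \<le> \<beta>" "continuous_on {0..L} h" "\<And>s. s \<in> {0..L} \<Longrightarrow> 0 \<le> h s" "t \<in> {0..L}"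
  shows "(intfac \<beta> h has_real_derivative 2 * t / (1 + \<beta> * h t)) (at t within {0..L})"
  unfolding intfac_def
  by (rule integral_has_real_derivative[OF continuous_on_intfac_integrand[OF assms(1-3)] assms(4)])

lemma intfac_nonneg:
  assumes "0 \<le> \<beta>" "continuous_on {0..L} h" "\<And>s. s \<in> {0..L} \<Longrightarrow> 0 \<le> h s" "t \<in> {0..L}"
  shows "0 \<le> intfac \<beta> h t"
  unfolding intfac_def
  by (rule integral_nonneg[OF intfac_integrand_integrable[OF assms]]) (use assms in auto)

lemma intfac_antimono:
  assumes "0 \<le> \<beta>" "continuous_on {0..L} y1" "continuous_on {0..L} y2"
    and "\<And>s. s \<in> {0..L} \<Longrightarrow> 0 \<le> y2 s \<and> y2 s \<le> y1 s" and "t \<in> {0..L}"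
  shows "intfac \<beta> y1 t \<le> intfac \<beta> y2 t"
  unfolding intfac_def
proof (rule integral_le)
  show "(\<lambda>s. 2 * s / (1 + \<beta> * y1 s)) integrable_on {0..t}"
    by (rule intfac_integrand_integrable[OF assms(1,2)]) (use assms(4,5) in force)+
  show "(\<lambda>s. 2 * s / (1 + \<beta> * y2 s)) integrable_on {0..t}"
    by (rule intfac_integrand_integrable[OF assms(1,3)]) (use assms(4,5) in force)+
  fix s assume s: "s \<in> {0..t}"
  then have "0 \<le> \<beta> * y2 s" "\<beta> * y2 s \<le> \<beta> * y1 s"
    using assms(1,4,5) by (auto intro: mult_left_mono)
  then show "2 * s / (1 + \<beta> * y1 s) \<le> 2 * s / (1 + \<beta> * y2 s)"
    using s by (intro divide_left_mono) auto
qed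

lemma intfac_integrand_diff_le:
  assumes "0 \<le> \<beta>" "0 \<le> x1" "0 \<le> x2" "0 \<le> r" "r \<le> L"
  shows "2 * r / (1 + \<beta> * x1) - 2 * r / (1 + \<beta> * x2)
    \<le> 2 * L * \<beta> * max 0 (kirchhoff \<beta> x2 - kirchhoff \<beta> x1)"
proof -
  have d1: "1 \<le> 1 + \<beta> * x1" and d2: "1 \<le> 1 + \<beta> * x2" using assms by auto
  have "2 * r / (1 + \<beta> * x1) - 2 * r / (1 + \<beta> * x2)
      = 2 * r * \<beta> * (x2 - x1) / ((1 + \<beta> * x1) * (1 + \<beta> * x2))"
    using d1 d2 by (simp add: field_simps)
  also have "\<dots> \<le> 2 * r * \<beta> * max 0 (x2 - x1) / ((1 + \<beta> * x1) * (1 + \<beta> * x2))"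
    using assms d1 d2 by (intro divide_right_mono mult_left_mono) auto
  also have "\<dots> \<le> 2 * r * \<beta> * max 0 (x2 - x1)"
    using frac_le[of "2 * r * \<beta> * max 0 (x2 - x1)" _ 1] mult_mono[OF d1 d2] assms by simp
  also have "\<dots> \<le> 2 * L * \<beta> * max 0 (kirchhoff \<beta> x2 - kirchhoff \<beta> x1)"
    using assms kirchhoff_diff_ge[of \<beta> x1 x2]
    by (intro mult_mono) (auto simp: max_def)
  finally show ?thesis .
qed

lemma intfac_diff_le:
  assumes "0 \<le> \<beta>" "continuous_on {0..L} y1" "continuous_on {0..L} y2"
    and "\<And>s. s \<in> {0..L} \<Longrightarrow> 0 \<le> y1 s" "\<And>s. s \<in> {0..L} \<Longrightarrow> 0 \<le> y2 s" and t: "t \<in> {0..L}"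
  shows "intfac \<beta> y1 t - intfac \<beta> y2 t
    \<le> 2 * L * \<beta> * integral {0..t} (\<lambda>s. max 0 (kirchhoff \<beta> (y2 s) - kirchhoff \<beta> (y1 s)))"
proof -
  have i1: "(\<lambda>s. 2 * s / (1 + \<beta> * y1 s)) integrable_on {0..t}"
    and i2: "(\<lambda>s. 2 * s / (1 + \<beta> * y2 s)) integrable_on {0..t}"
    using intfac_integrand_integrable assms by blast+
  have "continuous_on {0..L} (\<lambda>s. max 0 (kirchhoff \<beta> (y2 s) - kirchhoff \<beta> (y1 s)))"
    using assms by (intro continuous_intros continuous_on_kirchhoff)
  then have iv: "(\<lambda>s. max 0 (kirchhoff \<beta> (y2 s) - kirchhoff \<beta> (y1 s))) integrable_on {0..t}"
    by (rule integrable_continuous_interval[OF continuous_on_subset]) (use t in auto)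
  have "intfac \<beta> y1 t - intfac \<beta> y2 t
      = integral {0..t} (\<lambda>s. 2 * s / (1 + \<beta> * y1 s) - 2 * s / (1 + \<beta> * y2 s))"
    unfolding intfac_def by (rule integral_diff[OF i1 i2, symmetric])
  also have "\<dots> \<le> integral {0..t}
      (\<lambda>s. 2 * L * \<beta> * max 0 (kirchhoff \<beta> (y2 s) - kirchhoff \<beta> (y1 s)))"
    using t assms(4,5)
    by (intro integral_le integrable_diff i1 i2 integrable_on_mult_right iv intfac_integrand_diff_le
        assms(1)) auto
  finally show ?thesis by simp
qed

lemma slope_bounds:
  assumes "0 \<le> \<gamma>" "0 \<le> \<beta>" "0 \<le> h 0" "h 0 \<le> 1" "0 \<le> h t" "0 \<le> intfac \<beta> h t"
  shows "0 \<le> slope \<gamma> \<beta> h t" "slope \<gamma> \<beta> h t \<le> \<gamma>"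
proof -
  have num: "0 \<le> \<gamma> * h 0 * exp (- intfac \<beta> h t)" "\<gamma> * h 0 * exp (- intfac \<beta> h t) \<le> \<gamma> * 1 * 1"
    using assms by (simp, intro mult_mono) auto
  have "1 \<le> 1 + \<beta> * h t" using assms by simp
  then show "0 \<le> slope \<gamma> \<beta> h t" "slope \<gamma> \<beta> h t \<le> \<gamma>"
    using num frac_le[of \<gamma> "\<gamma> * h 0 * exp (- intfac \<beta> h t)" 1] assms(1)
    unfolding slope_def by simp_all
qed

section \<open>The first order problem\<close>

definition integral_solution :: "real \<Rightarrow> real \<Rightarrow> real \<Rightarrow> (real \<Rightarrow> real) \<Rightarrow> bool" where
  "integral_solution \<gamma> \<beta> lam h \<longleftrightarrow> (\<forall>t\<in>{0..lam}. 0 \<le> h t \<and> h t \<le> 1) \<and> h lam = 1 \<and>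
     (\<forall>t\<in>{0..lam}. (h has_real_derivative slope \<gamma> \<beta> h t) (at t within {0..lam}))"

lemma integral_solution_continuous:
  "integral_solution \<gamma> \<beta> lam h \<Longrightarrow> continuous_on {0..lam} h"
  unfolding integral_solution_def by (auto intro: DERIV_continuous_on)

lemma integral_solution_intfac_nonneg:
  assumes "0 \<le> \<beta>" "integral_solution \<gamma> \<beta> lam h" "t \<in> {0..lam}"
  shows "0 \<le> intfac \<beta> h t"
  using assms integral_solution_continuous[OF assms(2)]
  by (intro intfac_nonneg) (auto simp: integral_solution_def)

lemma integral_solution_slope_bounds:
  assumes "0 \<le> \<gamma>" "0 \<le> \<beta>" "integral_solution \<gamma> \<beta> lam h" "t \<in> {0..lam}"
  shows "0 \<le> slope \<gamma> \<beta> h t" "slope \<gamma> \<beta> h t \<le> \<gamma>"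
  using assms integral_solution_intfac_nonneg[OF assms(2-4)]
  by (intro slope_bounds; auto simp: integral_solution_def)+

lemma integral_solution_lipschitz:
  assumes "0 \<le> \<gamma>" "0 \<le> \<beta>" "integral_solution \<gamma> \<beta> lam h" "t \<in> {0..lam}" "t' \<in> {0..lam}"
  shows "\<bar>h t - h t'\<bar> \<le> \<gamma> * \<bar>t - t'\<bar>"
proof (rule has_real_derivative_bounded_imp_lipschitz[OF _ _ assms(4,5)])
  show "\<And>x. x \<in> {0..lam} \<Longrightarrow> (h has_real_derivative slope \<gamma> \<beta> h x) (at x within {0..lam})"
    using assms(3) unfolding integral_solution_def by blast
  show "\<And>x. x \<in> {0..lam} \<Longrightarrow> \<bar>slope \<gamma> \<beta> h x\<bar> \<le> \<gamma>"
    using integral_solution_slope_bounds[OF assms(1-3)] by fastforce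
qed

lemma integral_solution_initial_pos:
  assumes "0 \<le> \<gamma>" "0 \<le> \<beta>" "0 < lam" "integral_solution \<gamma> \<beta> lam h"
  shows "0 < h 0"
proof (rule ccontr)
  assume "\<not> 0 < h 0"
  then have h0: "h 0 = 0" using assms unfolding integral_solution_def by force
  have "\<bar>h lam - h 0\<bar> \<le> 0 * \<bar>lam - 0\<bar>"
  proof (rule has_real_derivative_bounded_imp_lipschitz)
    show "\<And>x. x \<in> {0..lam} \<Longrightarrow> (h has_real_derivative slope \<gamma> \<beta> h x) (at x within {0..lam})"
      using assms(4) unfolding integral_solution_def by blast
  qed (use h0 assms(3) in \<open>auto simp: slope_def\<close>)
  then show False using h0 assms(4) by (simp add: integral_solution_def)
qed

lemma integral_solution_kirchhoff_deriv:
  assumes "0 \<le> \<beta>" "integral_solution \<gamma> \<beta> lam h" "t \<in> {0..lam}"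
  shows "((\<lambda>s. kirchhoff \<beta> (h s)) has_real_derivative \<gamma> * h 0 * exp (- intfac \<beta> h t))
    (at t within {0..lam})"
proof -
  have "1 + \<beta> * h t \<noteq> 0" using assms unfolding integral_solution_def
    by (metis add_nonneg_eq_0_iff mult_nonneg_nonneg zero_neq_one zero_le_one)
  moreover have "(h has_real_derivative slope \<gamma> \<beta> h t) (at t within {0..lam})"
    using assms unfolding integral_solution_def by blast
  ultimately show ?thesis
    using kirchhoff_has_real_derivative[of h "slope \<gamma> \<beta> h t" t "{0..lam}" \<beta>]
    by (simp add: slope_def)
qed

lemma integral_solution_intfac_lipschitz:
  assumes "0 \<le> \<beta>" "integral_solution \<gamma> \<beta> lam h" "t \<in> {0..lam}" "t' \<in> {0..lam}"
  shows "\<bar>intfac \<beta> h t - intfac \<beta> h t'\<bar> \<le> 2 * lam * \<bar>t - t'\<bar>"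
proof (rule has_real_derivative_bounded_imp_lipschitz[OF intfac_has_real_derivative _ assms(3,4)])
  show "continuous_on {0..lam} h" by (rule integral_solution_continuous[OF assms(2)])
  fix x assume x: "x \<in> {0..lam}"
  then have "0 \<le> \<beta> * h x" using assms unfolding integral_solution_def by auto
  then show "\<bar>2 * x / (1 + \<beta> * h x)\<bar> \<le> 2 * lam"
    using x frac_le[of "2 * x" "2 * x" 1 "1 + \<beta> * h x"] by auto
qed (use assms in \<open>auto simp: integral_solution_def\<close>)

lemma flux_equation_solution:
  fixes h y' :: "real \<Rightarrow> real"
  assumes b: "0 \<le> \<beta>" and hc: "continuous_on {0..lam} h" and hb: "\<And>t. t \<in> {0..lam} \<Longrightarrow> 0 \<le> h t"
    and flux: "\<And>t. t \<in> {0<..<lam} \<Longrightarrow>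
      ((\<lambda>s. (1 + \<beta> * h s) * y' s) has_real_derivative (- 2 * t * y' t)) (at t)"
  obtains c where "\<And>t. t \<in> {0<..<lam} \<Longrightarrow> y' t = c * exp (- intfac \<beta> h t) / (1 + \<beta> * h t)"
proof -
  have den: "1 \<le> 1 + \<beta> * h t" if "t \<in> {0..lam}" for t using hb[OF that] b by simp
  define z where "z t = (1 + \<beta> * h t) * y' t * exp (intfac \<beta> h t)" for t
  have "(z has_real_derivative 0) (at t within {0<..<lam})" if t: "t \<in> {0<..<lam}" for t
  proof -
    have "at t within {0..lam} = at t" using t by (intro at_within_Icc_at) auto
    then have "(intfac \<beta> h has_real_derivative 2 * t / (1 + \<beta> * h t)) (at t)"
      using intfac_has_real_derivative[OF b hc hb, of t] t by auto
    then have "((\<lambda>s. exp (intfac \<beta> h s)) has_real_derivative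
        exp (intfac \<beta> h t) * (2 * t / (1 + \<beta> * h t))) (at t)"
      by (rule DERIV_fun_exp)
    from DERIV_mult[OF flux[OF t] this] have "(z has_real_derivative 0) (at t)"
      unfolding z_def using den[of t] t by simp
    then show ?thesis by (rule has_field_derivative_at_within)
  qed
  then obtain c where zc: "\<And>t. t \<in> {0<..<lam} \<Longrightarrow> z t = c"
    using has_field_derivative_zero_constant[of "{0<..<lam}" z] by auto
  show ?thesis
  proof
    fix t assume t: "t \<in> {0<..<lam}"
    have c: "(1 + \<beta> * h t) * y' t * exp (intfac \<beta> h t) = c" using zc[OF t] by (simp add: z_def)
    have "c * exp (- intfac \<beta> h t) / (1 + \<beta> * h t) =
        (1 + \<beta> * h t) * y' t * (exp (intfac \<beta> h t) * exp (- intfac \<beta> h t)) / (1 + \<beta> * h t)"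
      unfolding c[symmetric] by (simp add: ac_simps)
    then show "y' t = c * exp (- intfac \<beta> h t) / (1 + \<beta> * h t)"
      using den[of t] t by (simp add: exp_minus_inverse)
  qed
qed

lemma solves_bvp_imp_integral_solution:
  assumes b: "0 \<le> \<beta>" and lam: "0 < lam" and adm: "admissible lam h"
    and sol: "solves_bvp \<gamma> \<beta> lam h"
  shows "integral_solution \<gamma> \<beta> lam h"
proof -
  obtain y' where d1: "\<And>t. t \<in> {0..lam} \<Longrightarrow> (h has_real_derivative y' t) (at t within {0..lam})"
    and flux: "\<And>t. t \<in> {0<..<lam} \<Longrightarrow>
      ((\<lambda>s. (1 + \<beta> * h s) * y' s) has_real_derivative (- 2 * t * y' t)) (at t)"
    and bc: "y' 0 + \<beta> * h 0 * y' 0 - \<gamma> * h 0 = 0" and en: "h lam = 1"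
    using sol unfolding solves_bvp_def by blast
  have hb: "\<And>t. t \<in> {0..lam} \<Longrightarrow> 0 \<le> h t \<and> h t \<le> 1"
    using adm unfolding admissible_def by blast
  have hc: "continuous_on {0..lam} h" using d1 by (rule DERIV_continuous_on)
  obtain c where yG: "\<And>t. t \<in> {0<..<lam} \<Longrightarrow> y' t = c * exp (- intfac \<beta> h t) / (1 + \<beta> * h t)"
    by (rule flux_equation_solution[OF b hc _ flux]) (use hb in auto)
  define G where "G t = c * exp (- intfac \<beta> h t) / (1 + \<beta> * h t)" for t
  have den: "1 \<le> 1 + \<beta> * h t" if "t \<in> {0..lam}" for t using hb[OF that] b by simp
  have "continuous_on {0..lam} (intfac \<beta> h)"
    by (rule DERIV_continuous_on, rule intfac_has_real_derivative[OF b hc]) (use hb in auto)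
  then have Gc: "continuous_on {0..lam} G"
    unfolding G_def using hc den by (intro continuous_intros) force+
  have dG: "(h has_real_derivative G t) (at t within {0..lam})" if "t \<in> {0..lam}" for t
  proof (intro has_real_derivative_Icc_from_interior[OF hc Gc _ that])
    fix s assume s: "s \<in> {0<..<lam}"
    then have "at s within {0..lam} = at s" by (intro at_within_Icc_at) auto
    then show "(h has_real_derivative G s) (at s)" using d1[of s] s yG[OF s] by (auto simp: G_def)
  qed
  have "y' 0 = G 0"
    using vector_derivative_unique_within_closed_interval[of 0 lam 0 h "y' 0" "G 0"] lam
      d1[of 0] dG[of 0] by (auto simp: has_real_derivative_iff_has_vector_derivative)
  then have "y' 0 * (1 + \<beta> * h 0) = c" using den[of 0] lam by (simp add: G_def intfac_def)
  then have "c = \<gamma> * h 0" using bc by (simp add: algebra_simps)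
  then have "G = slope \<gamma> \<beta> h" by (auto simp: G_def slope_def)
  then show ?thesis unfolding integral_solution_def using hb en dG by auto
qed

section \<open>Comparison principle\<close>

lemma kirchhoff_flux_gap_ge:
  assumes g: "0 \<le> \<gamma>" and b: "0 \<le> \<beta>"
    and s1: "integral_solution \<gamma> \<beta> l1 y1" and s2: "integral_solution \<gamma> \<beta> l2 y2"
    and L: "L \<le> l1" "L \<le> l2" and init: "y2 0 \<le> y1 0" and x: "x \<in> {0..L}"
  shows "- (2 * \<gamma> * \<beta> * L *
      integral {0..x} (\<lambda>s. max 0 (kirchhoff \<beta> (y2 s) - kirchhoff \<beta> (y1 s))))
    \<le> \<gamma> * y1 0 * exp (- intfac \<beta> y1 x) - \<gamma> * y2 0 * exp (- intfac \<beta> y2 x)"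
proof -
  define V where "V = integral {0..x} (\<lambda>s. max 0 (kirchhoff \<beta> (y2 s) - kirchhoff \<beta> (y1 s)))"
  have sub1: "{0..L} \<subseteq> {0..l1}" and sub2: "{0..L} \<subseteq> {0..l2}" using L by auto
  have y1: "\<And>s. s \<in> {0..L} \<Longrightarrow> 0 \<le> y1 s" and y2: "\<And>s. s \<in> {0..L} \<Longrightarrow> 0 \<le> y2 s \<and> y2 s \<le> 1"
    using s1 s2 sub1 sub2 unfolding integral_solution_def by auto
  have c1: "continuous_on {0..L} y1" and c2: "continuous_on {0..L} y2"
    using integral_solution_continuous[OF s1] integral_solution_continuous[OF s2] sub1 sub2
    by (auto intro: continuous_on_subset)
  have vc: "continuous_on {0..L} (\<lambda>s. max 0 (kirchhoff \<beta> (y2 s) - kirchhoff \<beta> (y1 s)))"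
    using c1 c2 by (intro continuous_intros continuous_on_kirchhoff)
  have "0 \<le> V" unfolding V_def
    by (rule integral_nonneg[OF integrable_continuous_interval[OF continuous_on_subset[OF vc]]])
      (use x in auto)
  moreover have "intfac \<beta> y1 x - intfac \<beta> y2 x \<le> 2 * L * \<beta> * V"
    unfolding V_def using intfac_diff_le[OF b c1 c2 _ _ x] y1 y2 by blast
  ultimately have "- (2 * L * \<beta> * V) \<le> y1 0 * exp (- intfac \<beta> y1 x) - y2 0 * exp (- intfac \<beta> y2 x)"
    using y2[of 0] init b x sub2
    by (intro mult_exp_minus_diff_ge integral_solution_intfac_nonneg[OF b s2]) auto
  from mult_left_mono[OF this g] show ?thesis by (simp add: V_def algebra_simps)
qed

lemma kirchhoff_gap_gronwall:
  assumes g: "0 \<le> \<gamma>" and b: "0 \<le> \<beta>"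
    and s1: "integral_solution \<gamma> \<beta> l1 y1" and s2: "integral_solution \<gamma> \<beta> l2 y2"
    and L: "L \<le> l1" "L \<le> l2" and init: "y2 0 \<le> y1 0" and t: "t \<in> {0..L}"
  shows "max 0 (kirchhoff \<beta> (y2 t) - kirchhoff \<beta> (y1 t)) \<le> 2 * \<gamma> * \<beta> * L\<^sup>2 *
    integral {0..t} (\<lambda>s. max 0 (kirchhoff \<beta> (y2 s) - kirchhoff \<beta> (y1 s)))"
proof -
  define v where "v s = max 0 (kirchhoff \<beta> (y2 s) - kirchhoff \<beta> (y1 s))" for s
  have sub1: "{0..L} \<subseteq> {0..l1}" and sub2: "{0..L} \<subseteq> {0..l2}" using L by auto
  have vc: "continuous_on {0..L} v"
    using integral_solution_continuous[OF s1] integral_solution_continuous[OF s2] sub1 sub2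
    unfolding v_def by (intro continuous_intros continuous_on_kirchhoff) (auto intro: continuous_on_subset)
  have v_int: "\<And>s. s \<in> {0..L} \<Longrightarrow> v integrable_on {0..s}"
    by (rule integrable_continuous_interval[OF continuous_on_subset[OF vc]]) auto
  have v_nonneg: "\<And>s. 0 \<le> v s" by (simp add: v_def)
  define V where "V = integral {0..t} v"
  have V_nonneg: "0 \<le> V" unfolding V_def by (rule integral_nonneg[OF v_int[OF t] v_nonneg])
  define c where "c = 2 * \<gamma> * \<beta> * L * V"
  define u where "u x = \<gamma> * y1 0 * exp (- intfac \<beta> y1 x) - \<gamma> * y2 0 * exp (- intfac \<beta> y2 x)"
    for x
  define w where "w s = kirchhoff \<beta> (y1 s) - kirchhoff \<beta> (y2 s) + c * s" for s
  have "w 0 \<le> w t"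
  proof (rule has_real_derivative_nonneg_imp_le[of 0 t w "\<lambda>x. u x + c"])
    fix x assume x: "x \<in> {0..t}"
    then have xL: "x \<in> {0..L}" using t by auto
    have "integral {0..x} v \<le> V"
      unfolding V_def using x t v_int v_nonneg by (intro integral_subset_le) auto
    then have "2 * \<gamma> * \<beta> * L * integral {0..x} v \<le> c"
      unfolding c_def using g b t by (intro mult_left_mono) auto
    then show "0 \<le> u x + c"
      using kirchhoff_flux_gap_ge[OF g b s1 s2 L init xL] by (simp add: u_def v_def[abs_def])
    have "(w has_real_derivative u x + c * 1) (at x within {0..L})"
      unfolding u_def w_def using xL sub1 sub2
      by (intro DERIV_add DERIV_diff DERIV_cmult DERIV_ident
          DERIV_subset[OF integral_solution_kirchhoff_deriv[OF b s1]]
          DERIV_subset[OF integral_solution_kirchhoff_deriv[OF b s2]]) auto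
    from DERIV_subset[OF this]
    show "(w has_real_derivative u x + c) (at x within {0..t})"
      using t by auto
  qed (use t in auto)
  moreover have "kirchhoff \<beta> (y2 0) \<le> kirchhoff \<beta> (y1 0)"
  proof -
    have "0 \<le> y2 0" using s2 t L unfolding integral_solution_def by auto
    then show ?thesis using kirchhoff_le_iff[OF b] init by auto
  qed
  moreover have "c * t \<le> c * L"
    using t g b V_nonneg by (intro mult_left_mono) (auto simp: c_def)
  ultimately have "kirchhoff \<beta> (y2 t) - kirchhoff \<beta> (y1 t) \<le> 2 * \<gamma> * \<beta> * L\<^sup>2 * V"
    by (fastforce simp: w_def c_def power2_eq_square algebra_simps)
  then show ?thesis
    using g b V_nonneg by (simp add: v_def[abs_def] V_def)
qed

lemma integral_solution_comparison:
  assumes g: "0 \<le> \<gamma>" and b: "0 \<le> \<beta>"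
    and s1: "integral_solution \<gamma> \<beta> l1 y1" and s2: "integral_solution \<gamma> \<beta> l2 y2"
    and L: "L \<le> l1" "L \<le> l2" and init: "y2 0 \<le> y1 0" and t: "t \<in> {0..L}"
  shows "y2 t \<le> y1 t"
proof -
  define v where "v s = max 0 (kirchhoff \<beta> (y2 s) - kirchhoff \<beta> (y1 s))" for s
  have "continuous_on {0..L} y1" "continuous_on {0..L} y2"
    using integral_solution_continuous[OF s1] integral_solution_continuous[OF s2] L
    by (auto elim!: continuous_on_subset)
  then have "continuous_on {0..L} v"
    unfolding v_def by (intro continuous_intros continuous_on_kirchhoff)
  then have "v t = 0"
    by (rule gronwall_zero[where K = "2 * \<gamma> * \<beta> * L\<^sup>2"])
      (use kirchhoff_gap_gronwall[OF g b s1 s2 L init] g b t in \<open>auto simp: v_def[abs_def]\<close>)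
  then have "kirchhoff \<beta> (y2 t) \<le> kirchhoff \<beta> (y1 t)" by (simp add: v_def max_def split: if_splits)
  moreover have "0 \<le> y1 t" "0 \<le> y2 t"
    using s1 s2 t L unfolding integral_solution_def by auto
  ultimately show ?thesis using kirchhoff_le_iff[OF b] by blast
qed

section \<open>Dependence on the interval length\<close>

(* A solution on a longer interval must start lower: otherwise it would stay above the
   shorter one up to the end point of the latter, where it is still strictly below 1. *)
lemma integral_solution_initial_antimono:
  assumes g: "0 < \<gamma>" and b: "0 \<le> \<beta>" and l: "0 < l1" "l1 < l2"
    and s1: "integral_solution \<gamma> \<beta> l1 y1" and s2: "integral_solution \<gamma> \<beta> l2 y2"
  shows "y2 0 \<le> y1 0"
proof (rule ccontr)
  assume "\<not> y2 0 \<le> y1 0"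
  then have "y1 l1 \<le> y2 l1"
    using integral_solution_comparison[OF _ b s2 s1, of l1 l1] g l by auto
  moreover have "y2 l1 < y2 l2"
  proof (rule has_real_derivative_pos_imp_less[of 0 l2 y2 "slope \<gamma> \<beta> y2"])
    show "\<And>x. x \<in> {0..l2} \<Longrightarrow> (y2 has_real_derivative slope \<gamma> \<beta> y2 x) (at x within {0..l2})"
      using s2 unfolding integral_solution_def by blast
    fix x assume x: "x \<in> {0..l2}"
    then have "0 < 1 + \<beta> * y2 x" using s2 b unfolding integral_solution_def
      by (smt (verit) mult_nonneg_nonneg)
    then show "0 < slope \<gamma> \<beta> y2 x"
      using g integral_solution_initial_pos[OF _ b _ s2] l unfolding slope_def by simp
  qed (use l in auto)
  ultimately show False using s1 s2 unfolding integral_solution_def by simp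
qed

lemma integral_solution_antimono:
  assumes "0 < \<gamma>" "0 \<le> \<beta>" "0 < l1" "l1 < l2"
    and "integral_solution \<gamma> \<beta> l1 y1" "integral_solution \<gamma> \<beta> l2 y2" "t \<in> {0..l1}"
  shows "y2 t \<le> y1 t"
  using integral_solution_comparison[of \<gamma> \<beta> l1 y1 l2 y2 l1 t]
    integral_solution_initial_antimono[of \<gamma> \<beta> l1 l2 y1 y2] assms by auto

(* F(y1) - F(y2) is nondecreasing on [0, l1], and at l1 it is bounded by the increase of
   F(y2) over [l1, l2], which is at most gamma (l2 - l1) since F(y2)' <= gamma. *)
lemma integral_solution_kirchhoff_gap_le:
  assumes g: "0 < \<gamma>" and b: "0 \<le> \<beta>" and l: "0 < l1" "l1 < l2"
    and s1: "integral_solution \<gamma> \<beta> l1 y1" and s2: "integral_solution \<gamma> \<beta> l2 y2"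
    and t: "t \<in> {0..l1}"
  shows "kirchhoff \<beta> (y1 t) - kirchhoff \<beta> (y2 t) \<le> \<gamma> * (l2 - l1)"
proof -
  have sub: "{0..l1} \<subseteq> {0..l2}" using l by auto
  have y1: "\<And>s. s \<in> {0..l1} \<Longrightarrow> 0 \<le> y1 s" and y2: "\<And>s. s \<in> {0..l2} \<Longrightarrow> 0 \<le> y2 s \<and> y2 s \<le> 1"
    using s1 s2 unfolding integral_solution_def by auto
  have init: "y2 0 \<le> y1 0" by (rule integral_solution_initial_antimono[OF assms(1-6)])
  define w where "w s = kirchhoff \<beta> (y1 s) - kirchhoff \<beta> (y2 s)" for s
  have "w t \<le> w l1"
  proof (rule has_real_derivative_nonneg_imp_le[of 0 l1 w])
    fix x assume x: "x \<in> {0..l1}"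
    show "(w has_real_derivative \<gamma> * y1 0 * exp (- intfac \<beta> y1 x) - \<gamma> * y2 0 * exp (- intfac \<beta> y2 x))
        (at x within {0..l1})"
      unfolding w_def using x sub
      by (intro DERIV_diff integral_solution_kirchhoff_deriv[OF b s1]
          DERIV_subset[OF integral_solution_kirchhoff_deriv[OF b s2]]) auto
    have "intfac \<beta> y1 x \<le> intfac \<beta> y2 x"
      using integral_solution_continuous[OF s1] integral_solution_continuous[OF s2] sub x
        integral_solution_antimono[OF assms(1-6)] y2
      by (intro intfac_antimono[OF b, of l1]) (auto intro: continuous_on_subset)
    then have "y2 0 * exp (- intfac \<beta> y2 x) \<le> y1 0 * exp (- intfac \<beta> y1 x)"
      using init y2[of 0] l by (intro mult_mono) auto
    then show "0 \<le> \<gamma> * y1 0 * exp (- intfac \<beta> y1 x) - \<gamma> * y2 0 * exp (- intfac \<beta> y2 x)"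
      using g by (simp add: mult.assoc mult_left_mono)
  qed (use t in auto)
  also have "w l1 \<le> \<gamma> * (l2 - l1)"
  proof -
    have "\<gamma> * l1 - kirchhoff \<beta> (y2 l1) \<le> \<gamma> * l2 - kirchhoff \<beta> (y2 l2)"
    proof (rule has_real_derivative_nonneg_imp_le[of 0 l2 "\<lambda>s. \<gamma> * s - kirchhoff \<beta> (y2 s)"])
      fix x assume x: "x \<in> {0..l2}"
      show "((\<lambda>s. \<gamma> * s - kirchhoff \<beta> (y2 s)) has_real_derivative
          \<gamma> - \<gamma> * y2 0 * exp (- intfac \<beta> y2 x)) (at x within {0..l2})"
        using DERIV_diff[OF DERIV_cmult[OF DERIV_ident]
            integral_solution_kirchhoff_deriv[OF b s2 x], of \<gamma>] by simp
      have "y2 0 * exp (- intfac \<beta> y2 x) \<le> 1 * 1"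
        using y2[of 0] l integral_solution_intfac_nonneg[OF b s2 x] by (intro mult_mono) auto
      then show "0 \<le> \<gamma> - \<gamma> * y2 0 * exp (- intfac \<beta> y2 x)"
        using mult_left_mono[of _ 1 \<gamma>] g by (simp add: mult.assoc)
    qed (use l in auto)
    then show ?thesis using s1 s2 unfolding w_def integral_solution_def by (simp add: algebra_simps)
  qed
  finally show ?thesis by (simp add: w_def)
qed

lemma integral_solution_lipschitz_param:
  assumes g: "0 < \<gamma>" and b: "0 \<le> \<beta>" and l: "0 < l1" "l1 < l2"
    and s1: "integral_solution \<gamma> \<beta> l1 y1" and s2: "integral_solution \<gamma> \<beta> l2 y2"
    and t: "t \<in> {0..l1}"
  shows "\<bar>y1 t - y2 t\<bar> \<le> \<gamma> * (l2 - l1)"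
proof -
  have "y2 t \<le> y1 t" by (rule integral_solution_antimono[OF assms])
  moreover have "0 \<le> y2 t" using s2 t l unfolding integral_solution_def by auto
  ultimately show ?thesis
    using kirchhoff_diff_ge[OF b] integral_solution_kirchhoff_gap_le[OF assms] by fastforce
qed

lemma intfac_lipschitz_param:
  assumes g: "0 < \<gamma>" and b: "0 \<le> \<beta>" and l: "0 < l1" "l1 < l2"
    and s1: "integral_solution \<gamma> \<beta> l1 y1" and s2: "integral_solution \<gamma> \<beta> l2 y2"
    and t: "t \<in> {0..l1}"
  shows "\<bar>intfac \<beta> y1 t - intfac \<beta> y2 t\<bar> \<le> 2 * l1\<^sup>2 * \<beta> * \<gamma> * (l2 - l1)"
proof -
  have sub: "{0..l1} \<subseteq> {0..l2}" using l by auto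
  have c1: "continuous_on {0..l1} y1" and c2: "continuous_on {0..l1} y2"
    using integral_solution_continuous[OF s1] integral_solution_continuous[OF s2] sub
    by (auto intro: continuous_on_subset)
  have y: "\<And>s. s \<in> {0..l1} \<Longrightarrow> 0 \<le> y2 s \<and> y2 s \<le> y1 s"
    using s2 sub integral_solution_antimono[OF g b l s1 s2] unfolding integral_solution_def by force
  have "intfac \<beta> y2 t - intfac \<beta> y1 t \<le> 2 * l1 * \<beta> *
      integral {0..t} (\<lambda>s. max 0 (kirchhoff \<beta> (y1 s) - kirchhoff \<beta> (y2 s)))"
    using y t by (intro intfac_diff_le[OF b c2 c1]) (auto intro: order_trans)
  also have "\<dots> \<le> 2 * l1 * \<beta> * integral {0..t} (\<lambda>s. \<gamma> * (l2 - l1))"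
    using t b l g integral_solution_kirchhoff_gap_le[OF g b l s1 s2]
    by (intro mult_left_mono integral_le integrable_continuous_interval continuous_intros
        continuous_on_kirchhoff continuous_on_subset[OF c1] continuous_on_subset[OF c2]) auto
  also have "\<dots> \<le> 2 * l1 * \<beta> * (l1 * (\<gamma> * (l2 - l1)))"
    using t b l g by (intro mult_left_mono mult_right_mono) auto
  finally show ?thesis
    using intfac_antimono[OF b c1 c2 y t] by (simp add: power2_eq_square algebra_simps)
qed

section \<open>Joint continuity on the triangle\<close>

(* Compare (l1, t1) and (l2, t2), l1 <= l2, through (l1, s) and (l2, s) with s = min t2 l1. *)
lemma lipschitz_on_triangle:
  fixes g :: "real \<Rightarrow> real \<Rightarrow> real"
  assumes A: "0 \<le> A" and B: "0 \<le> B"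
    and lip_t: "\<And>l t t'. 0 < l \<Longrightarrow> l < M \<Longrightarrow> t \<in> {0..l} \<Longrightarrow> t' \<in> {0..l} \<Longrightarrow>
      \<bar>g l t - g l t'\<bar> \<le> A * \<bar>t - t'\<bar>"
    and lip_l: "\<And>l1 l2 t. 0 < l1 \<Longrightarrow> l1 < l2 \<Longrightarrow> l2 < M \<Longrightarrow> t \<in> {0..l1} \<Longrightarrow>
      \<bar>g l1 t - g l2 t\<bar> \<le> B * (l2 - l1)"
  shows "(3 * A + B)-lipschitz_on {(l, t). 0 < l \<and> 0 \<le> t \<and> t \<le> l \<and> l < M} (\<lambda>(l, t). g l t)"
proof -
  have bound: "\<bar>g l1 t1 - g l2 t2\<bar> \<le> (3 * A + B) * dist (l1, t1) (l2, t2)"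
    if p: "0 < l1" "l1 \<le> l2" "l2 < M" "t1 \<in> {0..l1}" "t2 \<in> {0..l2}" for l1 t1 l2 t2
  proof -
    define s where "s = min t2 l1"
    have s: "s \<in> {0..l1}" "\<bar>s - t2\<bar> \<le> l2 - l1" using p by (auto simp: s_def)
    have dl: "l2 - l1 \<le> dist (l1, t1) (l2, t2)" and dt: "\<bar>t1 - t2\<bar> \<le> dist (l1, t1) (l2, t2)"
      using dist_fst_le[of "(l1, t1)" "(l2, t2)"] dist_snd_le[of "(l1, t1)" "(l2, t2)"] p
      by (simp_all add: dist_real_def)
    have "\<bar>g l1 t1 - g l2 t2\<bar> \<le> \<bar>g l1 t1 - g l1 s\<bar> + \<bar>g l1 s - g l2 s\<bar> + \<bar>g l2 s - g l2 t2\<bar>"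
      by linarith
    also have "\<dots> \<le> A * \<bar>t1 - s\<bar> + B * (l2 - l1) + A * \<bar>s - t2\<bar>"
      using lip_t[of l1 t1 s] lip_l[of l1 l2 s] lip_t[of l2 s t2] p s
      by (cases "l1 = l2") (auto intro!: add_mono)
    also have "\<dots> \<le> A * (\<bar>t1 - t2\<bar> + (l2 - l1)) + B * (l2 - l1) + A * (l2 - l1)"
      using s A B by (intro add_mono mult_left_mono) auto
    also have "\<dots> \<le> (3 * A + B) * dist (l1, t1) (l2, t2)"
      using mult_left_mono[OF dt A] mult_left_mono[OF dl, of "2 * A + B"] A B
      by (simp add: algebra_simps)
    finally show ?thesis .
  qed
  show ?thesis
  proof (rule lipschitz_onI)
    fix x y assume "x \<in> {(l, t). 0 < l \<and> 0 \<le> t \<and> t \<le> l \<and> l < M}"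
      and "y \<in> {(l, t). 0 < l \<and> 0 \<le> t \<and> t \<le> l \<and> l < M}"
    then show "dist ((\<lambda>(l, t). g l t) x) ((\<lambda>(l, t). g l t) y) \<le> (3 * A + B) * dist x y"
      using bound bound[of "fst y" "fst x" "snd y" "snd x"]
      by (cases x, cases y, cases "fst x \<le> fst y")
        (auto simp: dist_real_def dist_commute abs_minus_commute)
  qed (use A B in simp)
qed

lemma continuous_on_triangle:
  fixes g :: "real \<Rightarrow> real \<Rightarrow> real"
  assumes "\<And>M. \<exists>A B. 0 \<le> A \<and> 0 \<le> B \<and>
      (\<forall>l t t'. 0 < l \<longrightarrow> l < M \<longrightarrow> t \<in> {0..l} \<longrightarrow> t' \<in> {0..l} \<longrightarrow>
        \<bar>g l t - g l t'\<bar> \<le> A * \<bar>t - t'\<bar>) \<and>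
      (\<forall>l1 l2 t. 0 < l1 \<longrightarrow> l1 < l2 \<longrightarrow> l2 < M \<longrightarrow> t \<in> {0..l1} \<longrightarrow>
        \<bar>g l1 t - g l2 t\<bar> \<le> B * (l2 - l1))"
  shows "continuous_on {(l, t). 0 < l \<and> 0 \<le> t \<and> t \<le> l} (\<lambda>(l, t). g l t)"
  unfolding continuous_on_eq_continuous_within
proof
  fix x :: "real \<times> real" assume x: "x \<in> {(l, t). 0 < l \<and> 0 \<le> t \<and> t \<le> l}"
  define M where "M = fst x + 1"
  obtain A B where "0 \<le> A" "0 \<le> B"
    "\<And>l t t'. 0 < l \<Longrightarrow> l < M \<Longrightarrow> t \<in> {0..l} \<Longrightarrow> t' \<in> {0..l} \<Longrightarrow>
      \<bar>g l t - g l t'\<bar> \<le> A * \<bar>t - t'\<bar>"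
    "\<And>l1 l2 t. 0 < l1 \<Longrightarrow> l1 < l2 \<Longrightarrow> l2 < M \<Longrightarrow> t \<in> {0..l1} \<Longrightarrow>
      \<bar>g l1 t - g l2 t\<bar> \<le> B * (l2 - l1)"
    using assms[of M] by blast
  from lipschitz_on_continuous_on[OF lipschitz_on_triangle[OF this]] x
  have "continuous (at x within {(l, t). 0 < l \<and> 0 \<le> t \<and> t \<le> l \<and> l < M}) (\<lambda>(l, t). g l t)"
    unfolding continuous_on_eq_continuous_within by (auto simp: M_def)
  moreover have "at x within {(l, t). 0 < l \<and> 0 \<le> t \<and> t \<le> l \<and> l < M} =
      at x within {(l, t). 0 < l \<and> 0 \<le> t \<and> t \<le> l}"
  proof (rule at_within_nhd[of _ "{p. fst p < M}"])
    show "open {p :: real \<times> real. fst p < M}"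
      by (rule open_Collect_less) (intro continuous_intros)+
  qed (auto simp: M_def)
  ultimately show "continuous (at x within {(l, t). 0 < l \<and> 0 \<le> t \<and> t \<le> l}) (\<lambda>(l, t). g l t)"
    by simp
qed

lemma integral_solution_family_continuous:
  assumes g: "0 < \<gamma>" and b: "0 \<le> \<beta>"
    and sol: "\<And>lam. 0 < lam \<Longrightarrow> integral_solution \<gamma> \<beta> lam (\<phi> lam)"
  shows "continuous_on {(l, t). 0 < l \<and> 0 \<le> t \<and> t \<le> l} (\<lambda>(l, t). \<phi> l t)"
proof (rule continuous_on_triangle, intro exI conjI allI impI)
  show "0 \<le> \<gamma>" using g by simp
  show "\<bar>\<phi> l t - \<phi> l t'\<bar> \<le> \<gamma> * \<bar>t - t'\<bar>" if "0 < l" "t \<in> {0..l}" "t' \<in> {0..l}" for l t t'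
    using integral_solution_lipschitz[OF _ b sol] g that by simp
  show "\<bar>\<phi> l1 t - \<phi> l2 t\<bar> \<le> \<gamma> * (l2 - l1)" if "0 < l1" "l1 < l2" "t \<in> {0..l1}" for l1 l2 t
    using integral_solution_lipschitz_param[OF g b _ _ sol sol] that by simp
qed (use g in simp)

lemma intfac_family_continuous:
  assumes g: "0 < \<gamma>" and b: "0 \<le> \<beta>"
    and sol: "\<And>lam. 0 < lam \<Longrightarrow> integral_solution \<gamma> \<beta> lam (\<phi> lam)"
  shows "continuous_on {(l, t). 0 < l \<and> 0 \<le> t \<and> t \<le> l} (\<lambda>(l, t). intfac \<beta> (\<phi> l) t)"
proof (rule continuous_on_triangle)
  fix M :: real
  show "\<exists>A B. 0 \<le> A \<and> 0 \<le> B \<and>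
      (\<forall>l t t'. 0 < l \<longrightarrow> l < M \<longrightarrow> t \<in> {0..l} \<longrightarrow> t' \<in> {0..l} \<longrightarrow>
        \<bar>intfac \<beta> (\<phi> l) t - intfac \<beta> (\<phi> l) t'\<bar> \<le> A * \<bar>t - t'\<bar>) \<and>
      (\<forall>l1 l2 t. 0 < l1 \<longrightarrow> l1 < l2 \<longrightarrow> l2 < M \<longrightarrow> t \<in> {0..l1} \<longrightarrow>
        \<bar>intfac \<beta> (\<phi> l1) t - intfac \<beta> (\<phi> l2) t\<bar> \<le> B * (l2 - l1))"
  proof (intro exI conjI allI impI)
    show "0 \<le> 2 * \<bar>M\<bar>" "0 \<le> 2 * M\<^sup>2 * \<beta> * \<gamma>" using g b by auto
    fix l t t' assume l: "0 < l" "l < M" "t \<in> {0..l}" "t' \<in> {0..l}"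
    have "\<bar>intfac \<beta> (\<phi> l) t - intfac \<beta> (\<phi> l) t'\<bar> \<le> 2 * l * \<bar>t - t'\<bar>"
      by (rule integral_solution_intfac_lipschitz[OF b sol[OF l(1)] l(3,4)])
    also have "\<dots> \<le> 2 * \<bar>M\<bar> * \<bar>t - t'\<bar>" using l by (intro mult_right_mono) auto
    finally show "\<bar>intfac \<beta> (\<phi> l) t - intfac \<beta> (\<phi> l) t'\<bar> \<le> 2 * \<bar>M\<bar> * \<bar>t - t'\<bar>" .
  next
    fix l1 l2 t assume l: "0 < l1" "l1 < l2" "l2 < M" "t \<in> {0..l1}"
    have "\<bar>intfac \<beta> (\<phi> l1) t - intfac \<beta> (\<phi> l2) t\<bar> \<le> 2 * l1\<^sup>2 * \<beta> * \<gamma> * (l2 - l1)"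
      using intfac_lipschitz_param[OF g b _ _ sol sol] l by simp
    also have "\<dots> \<le> 2 * M\<^sup>2 * \<beta> * \<gamma> * (l2 - l1)"
      using l g b by (intro mult_right_mono power_mono) auto
    finally show "\<bar>intfac \<beta> (\<phi> l1) t - intfac \<beta> (\<phi> l2) t\<bar> \<le> 2 * M\<^sup>2 * \<beta> * \<gamma> * (l2 - l1)" .
  qed
qed

lemma slope_family_continuous:
  assumes g: "0 < \<gamma>" and b: "0 \<le> \<beta>"
    and sol: "\<And>lam. 0 < lam \<Longrightarrow> integral_solution \<gamma> \<beta> lam (\<phi> lam)"
  shows "continuous_on {(l, t). 0 < l \<and> 0 \<le> t \<and> t \<le> l} (\<lambda>(l, t). slope \<gamma> \<beta> (\<phi> l) t)"
proof -
  let ?T = "{(l, t). 0 < l \<and> 0 \<le> t \<and> t \<le> l}"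
  have y: "continuous_on ?T (\<lambda>p. \<phi> (fst p) (snd p))"
    using integral_solution_family_continuous[OF g b sol] by (simp add: case_prod_beta')
  have "continuous_on ?T (\<lambda>p. (\<lambda>p. \<phi> (fst p) (snd p)) (fst p, 0))"
    by (rule continuous_on_compose2[OF y]) (auto intro!: continuous_intros)
  moreover have "continuous_on ?T (\<lambda>p. intfac \<beta> (\<phi> (fst p)) (snd p))"
    using intfac_family_continuous[OF g b sol] by (simp add: case_prod_beta')
  moreover have "\<forall>p\<in>?T. 1 + \<beta> * \<phi> (fst p) (snd p) \<noteq> 0"
    using sol b unfolding integral_solution_def
    by (auto simp: add_nonneg_eq_0_iff)
  ultimately show ?thesis
    unfolding slope_def case_prod_beta' using y by (intro continuous_intros) (auto simp: case_prod_beta')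
qed

theorem lemma3p11:
  fixes \<gamma> \<beta> :: real and \<phi> :: "real \<Rightarrow> real \<Rightarrow> real"
  assumes "\<gamma> > 0"
    and "0 \<le> \<beta>" and "\<beta> < beta1 \<gamma>"
    and "\<And>lam. lam > 0 \<Longrightarrow> admissible lam (\<phi> lam) \<and> solves_bvp \<gamma> \<beta> lam (\<phi> lam)"
    and "\<And>lam h. lam > 0 \<Longrightarrow> admissible lam h \<Longrightarrow> solves_bvp \<gamma> \<beta> lam h \<Longrightarrow>
            \<forall>t\<in>{0..lam}. h t = \<phi> lam t"
  shows "\<exists>D :: real \<Rightarrow> real \<Rightarrow> real.
           (\<forall>lam>0. \<forall>t\<in>{0..lam}. (\<phi> lam has_real_derivative D lam t) (at t within {0..lam})) \<and>
           continuous_on {(lam, t). 0 < lam \<and> 0 \<le> t \<and> t \<le> lam} (\<lambda>(lam, t). D lam t) \<and>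
           continuous_on {0<..} (\<lambda>lam. D lam lam)"
proof -
  have sol: "integral_solution \<gamma> \<beta> lam (\<phi> lam)" if "0 < lam" for lam
    using assms(4)[OF that] solves_bvp_imp_integral_solution[OF assms(2) that] by blast
  define D where "D lam t = slope \<gamma> \<beta> (\<phi> lam) t" for lam t
  have cont: "continuous_on {(lam, t). 0 < lam \<and> 0 \<le> t \<and> t \<le> lam} (\<lambda>(lam, t). D lam t)"
    unfolding D_def by (rule slope_family_continuous[OF assms(1,2) sol])
  have "continuous_on {0<..} (\<lambda>lam. (\<lambda>(lam, t). D lam t) (lam, lam))"
    by (rule continuous_on_compose2[OF cont]) (auto intro!: continuous_intros)
  then have "continuous_on {0<..} (\<lambda>lam. D lam lam)" by simp
  moreover have "\<forall>lam>0. \<forall>t\<in>{0..lam}. (\<phi> lam has_real_derivative D lam t) (at t within {0..lam})"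
    using sol unfolding integral_solution_def D_def by blast
  ultimately show ?thesis using cont by blast
qed

end
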